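(* Let $p\geqslant1$ and let $\mu$ be a Borel regular measure supported on $[0,1]$. Then for every $f\in M^p_\Lambda$ with $f(0)=0$, \[\int_{[0,1]}|f(t)|^p\,\mathrm{d}\mu(t)\lesssim_p\int_{[0,1]}\int_{[0,1]}|f'(\rho t)|\,|f(\rho t)|^{p-1}\,\mathrm{d}\mu(t)\,\mathrm{d}\rho,\] where the implicit constant depends only on $p$.
   Context: $\Lambda=(\lambda_k)_{k\geqslant0}$ is an increasing sequence of positive reals with $\sum_k1/\lambda_k<\infty$; $M_\Lambda$ is the set of finite sums $\sum a_kt^{\lambda_k}$ on $[0,1]$ and $M^p_\Lambda$ is its closure in $L^p([0,1])$. *)

theory Defs
  imports "HOL-Analysis.Analysis"
begin

definition muntz_seq :: "(nat \<Rightarrow> real) \<Rightarrow> bool" where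
  "muntz_seq \<Lambda> \<longleftrightarrow> strict_mono \<Lambda> \<and> (\<forall>k. 0 < \<Lambda> k) \<and> summable (\<lambda>k. 1 / \<Lambda> k)"

definition muntz_poly :: "(nat \<Rightarrow> real) \<Rightarrow> (real \<Rightarrow> real) \<Rightarrow> bool" where
  "muntz_poly \<Lambda> g \<longleftrightarrow> (\<exists>n a. \<forall>t\<in>{0..1}. g t = (\<Sum>k<n. a k * t powr \<Lambda> k))"

text \<open>f belongs to M^p_Lambda, the closure of M_Lambda in L^p([0,1]): f is the L^p-limit
  on [0,1] of a sequence of Muntz polynomials.\<close>
definition muntz_Lp :: "real \<Rightarrow> (nat \<Rightarrow> real) \<Rightarrow> (real \<Rightarrow> real) \<Rightarrow> bool" where
  "muntz_Lp p \<Lambda> f \<longleftrightarrow> (\<exists>g. (\<forall>n. muntz_poly \<Lambda> (g n)) \<and>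
      ((\<lambda>n. \<integral>\<^sup>+ t\<in>{0..1}. ennreal (\<bar>g n t - f t\<bar> powr p) \<partial>lborel) \<longlonglongrightarrow> 0))"

end

theory Submission
  imports Defs
begin

(* Away from the zeros of f, |f|^p has derivative p |f|^(p-1) sgn(f) f', so for 0 <= t < 1
   |f(t)|^p <= p * int_0^t |f'| |f|^(p-1), and the substitution x = rho t bounds this by
   p * int_0^1 |f'(rho t)| |f(rho t)|^(p-1) d rho.  The same estimate on subintervals shows that
   |f|^p has bounded variation on [0,1) whenever the right-hand side is finite at t = 1; then f has a
   left limit at 1, which by hypothesis is f(1), and the bound extends to t = 1.  Integrating the
   pointwise bound against mu and exchanging the two integrals gives the claim with C = p. *)

lemma convergent_at_left_if_mono_bounded:
  fixes g :: "real \<Rightarrow> real"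
  assumes "a < b"
    and mono: "\<And>x y. a < x \<Longrightarrow> x \<le> y \<Longrightarrow> y < b \<Longrightarrow> g x \<le> g y"
    and bound: "\<And>x. a < x \<Longrightarrow> x < b \<Longrightarrow> g x \<le> B"
  shows "\<exists>L. (g \<longlongrightarrow> L) (at_left b)"
proof -
  have "at b within ({..<b} \<inter> {a<..}) = at_left b"
    using \<open>a < b\<close> by (intro at_within_nhd[of _ "{a<..}"]) auto
  then show ?thesis
    using Lim_left_bound[of "{a<..}" b g B] mono bound by auto
qed

lemma constant_sign_if_nonzero:
  fixes f :: "real \<Rightarrow> real"
  assumes "connected S" "continuous_on S f" "\<And>x. x \<in> S \<Longrightarrow> f x \<noteq> 0"
  shows "(\<forall>x\<in>S. 0 < f x) \<or> (\<forall>x\<in>S. f x < 0)"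
proof (rule ccontr)
  assume "\<not> ?thesis"
  then obtain u v where u: "u \<in> S" "\<not> 0 < f u" and v: "v \<in> S" "\<not> f v < 0"
    by blast
  then have "f u \<le> 0" "0 \<le> f v" by simp_all
  moreover have "connected (f ` S)"
    by (rule connected_continuous_image[OF assms(2,1)])
  ultimately have "0 \<in> f ` S"
    by (rule connectedD_interval[rotated 3]) (use u v in auto)
  then show False using assms(3) by auto
qed

lemma convergent_at_left_if_abs_convergent:
  fixes f :: "real \<Rightarrow> real"
  assumes "a < b" "continuous_on {a<..<b} f" and lim: "((\<lambda>x. \<bar>f x\<bar>) \<longlongrightarrow> c) (at_left b)"
  shows "\<exists>L. (f \<longlongrightarrow> L) (at_left b)"
proof (cases "c = 0")
  case True
  then show ?thesis using lim by (auto simp: tendsto_rabs_zero_iff)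
next
  case False
  have "0 \<le> c" by (rule tendsto_lowerbound[OF lim]) auto
  with False have "eventually (\<lambda>x. 0 < \<bar>f x\<bar>) (at_left b)"
    using lim by (intro order_tendstoD) auto
  then obtain a' where a': "a' < b" "\<And>x. a' < x \<Longrightarrow> x < b \<Longrightarrow> f x \<noteq> 0"
    unfolding eventually_at_left_field by auto
  define S where "S = {max a a'<..<b}"
  have near: "eventually (\<lambda>x. x \<in> S) (at_left b)"
    unfolding S_def using a' \<open>a < b\<close> by (intro eventually_at_left_real) auto
  have "continuous_on S f" unfolding S_def using assms(2) by (rule continuous_on_subset) auto
  then consider "\<forall>x\<in>S. 0 < f x" | "\<forall>x\<in>S. f x < 0"
    using constant_sign_if_nonzero[of S f] a'(2) by (auto simp: S_def)
  then show ?thesis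
  proof cases
    case 1
    have "eventually (\<lambda>x. \<bar>f x\<bar> = f x) (at_left b)"
      using near by (rule eventually_mono) (use 1 in auto)
    then show ?thesis using lim by (blast intro: Lim_transform_eventually)
  next
    case 2
    have "eventually (\<lambda>x. - \<bar>f x\<bar> = f x) (at_left b)"
      using near by (rule eventually_mono) (use 2 in auto)
    then show ?thesis using tendsto_minus[OF lim] by (blast intro: Lim_transform_eventually)
  qed
qed

lemma borel_measurable_derivative_on_open:
  fixes f f' :: "real \<Rightarrow> real"
  assumes "open S" and deriv: "\<And>x. x \<in> S \<Longrightarrow> (f has_real_derivative f' x) (at x)"
  shows "(\<lambda>x. if x \<in> S then f' x else 0) \<in> borel_measurable borel"
proof (rule borel_measurable_LIMSEQ_real)
  have [measurable]: "S \<in> sets borel" using \<open>open S\<close> by auto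
  define F where "F x = (if x \<in> S then f x else 0)" for x
  have "continuous_on S f"
    using deriv by (intro continuous_at_imp_continuous_on) (auto intro: DERIV_isCont)
  then have [measurable]: "F \<in> borel_measurable borel"
    unfolding F_def by (intro borel_measurable_continuous_on_if) auto
  define q where "q n x = (if x \<in> S then (F (x + 1 / Suc n) - F x) * Suc n else 0)" for n x
  show "q n \<in> borel_measurable borel" for n unfolding q_def by measurable
  show "(\<lambda>n. q n x) \<longlonglongrightarrow> (if x \<in> S then f' x else 0)" for x
  proof (cases "x \<in> S")
    case True
    obtain e where "0 < e" "ball x e \<subseteq> S" using \<open>open S\<close> True by (auto simp: open_contains_ball)
    then obtain N where N: "1 / Suc N < e" by (metis nat_approx_posE)
    have "eventually (\<lambda>n. (f (x + 1 / Suc n) - f x) / (1 / Suc n) = q n x) sequentially"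
    proof (rule eventually_sequentiallyI[of N])
      fix n assume "N \<le> n"
      then have "1 / real (Suc n) \<le> 1 / Suc N" by (simp add: frac_le)
      then have "1 / real (Suc n) < e" using N by linarith
      then have "x + 1 / Suc n \<in> S" using \<open>ball x e \<subseteq> S\<close> by (auto simp: dist_real_def)
      then show "(f (x + 1 / Suc n) - f x) / (1 / Suc n) = q n x"
        using True by (simp add: q_def F_def)
    qed
    moreover have "((\<lambda>t. (f (x + t) - f x) / t) \<longlongrightarrow> f' x) (at 0)"
      using deriv[OF True] by (simp add: DERIV_def)
    moreover have "filterlim (\<lambda>n. 1 / real (Suc n)) (at 0) sequentially"
      unfolding filterlim_at using LIMSEQ_inverse_real_of_nat by (simp add: divide_inverse)
    ultimately show ?thesis
      using True by (auto intro: Lim_transform_eventually dest: filterlim_compose)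
  qed (simp add: q_def)
qed

lemma nn_integral_dilation_swap:
  fixes g :: "real \<Rightarrow> ennreal"
  assumes [measurable]: "g \<in> borel_measurable borel" "A \<in> sets borel"
    and sets_\<mu>: "sets \<mu> = sets borel" and "sigma_finite_measure \<mu>"
  shows "(\<integral>\<^sup>+t. (\<integral>\<^sup>+\<rho>\<in>A. g (\<rho> * t) \<partial>lborel) \<partial>\<mu>) = (\<integral>\<^sup>+\<rho>\<in>A. (\<integral>\<^sup>+t. g (\<rho> * t) \<partial>\<mu>) \<partial>lborel)"
proof -
  interpret \<mu>: sigma_finite_measure \<mu> by fact
  interpret pair_sigma_finite lborel \<mu> by unfold_locales
  have "(\<lambda>(\<rho>, t). g (\<rho> * t) * indicator A \<rho>) \<in> borel_measurable (lborel \<Otimes>\<^sub>M borel)"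
    by measurable
  then have "(\<integral>\<^sup>+t. (\<integral>\<^sup>+\<rho>. g (\<rho> * t) * indicator A \<rho> \<partial>lborel) \<partial>\<mu>)
      = (\<integral>\<^sup>+\<rho>. (\<integral>\<^sup>+t. g (\<rho> * t) * indicator A \<rho> \<partial>\<mu>) \<partial>lborel)"
    by (intro Fubini') (simp add: measurable_cong_sets[OF sets_pair_measure_cong[OF refl sets_\<mu>] refl])
  also have "\<dots> = (\<integral>\<^sup>+\<rho>. (\<integral>\<^sup>+t. g (\<rho> * t) \<partial>\<mu>) * indicator A \<rho> \<partial>lborel)"
    by (intro nn_integral_cong nn_integral_multc) (simp add: measurable_cong_sets[OF sets_\<mu> refl])
  finally show ?thesis by simp
qed

lemma borel_measurable_dilation_integral:
  fixes g :: "real \<Rightarrow> ennreal"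
  assumes [measurable]: "g \<in> borel_measurable borel" "A \<in> sets borel"
  shows "(\<lambda>t. \<integral>\<^sup>+\<rho>\<in>A. g (\<rho> * t) \<partial>lborel) \<in> borel_measurable borel"
  by (rule lborel.borel_measurable_nn_integral_fst[where f = "\<lambda>(t, \<rho>). g (\<rho> * t) * indicator A \<rho>", simplified])
    measurable

locale abs_powr_variation =
  fixes p :: real and f f' :: "real \<Rightarrow> real"
  assumes p_pos: "0 < p"
    and continuous: "continuous_on {0..<1} f"
    and deriv: "\<And>x. x \<in> {0<..<1} \<Longrightarrow> (f has_real_derivative f' x) (at x)"
begin

text \<open>Since \<open>0 powr 0 = 0\<close>, for \<open>p = 1\<close> the weight vanishes at the zeros of \<open>f\<close>; this is why
  the variation bound below is first proved on intervals where \<open>f\<close> has no zero.\<close>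
definition weight :: "real \<Rightarrow> real" where
  "weight x = (if x \<in> {0<..<1} then \<bar>f' x\<bar> * \<bar>f x\<bar> powr (p - 1) else 0)"

definition mass :: "real \<Rightarrow> real \<Rightarrow> ennreal" where
  "mass a b = (\<integral>\<^sup>+x\<in>{a..b}. ennreal (weight x) \<partial>lborel)"

definition dilation_mass :: "real \<Rightarrow> ennreal" where
  "dilation_mass t = (\<integral>\<^sup>+\<rho>\<in>{0..1}. ennreal (weight (\<rho> * t)) \<partial>lborel)"

lemma weight_nonneg: "0 \<le> weight x"
  by (simp add: weight_def)

lemma borel_measurable_weight [measurable]: "weight \<in> borel_measurable borel"
proof -
  have "continuous_on {0<..<1} f" using continuous by (rule continuous_on_subset) auto
  then have [measurable]: "(\<lambda>x. if x \<in> {0<..<1} then f x else 0) \<in> borel_measurable borel"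
    by (intro borel_measurable_continuous_on_if) auto
  have [measurable]: "(\<lambda>x. if x \<in> {0<..<1} then f' x else 0) \<in> borel_measurable borel"
    using deriv by (intro borel_measurable_derivative_on_open) auto
  have weight_eq: "weight = (\<lambda>x. \<bar>if x \<in> {0<..<1} then f' x else 0\<bar> *
      \<bar>if x \<in> {0<..<1} then f x else 0\<bar> powr (p - 1))"
    by (auto simp: weight_def fun_eq_iff)
  show ?thesis unfolding weight_eq by measurable
qed

lemma borel_measurable_dilation_mass [measurable]: "dilation_mass \<in> borel_measurable borel"
  unfolding dilation_mass_def[abs_def] by (intro borel_measurable_dilation_integral) auto

lemma mass_mono: "a \<le> a' \<Longrightarrow> b' \<le> b \<Longrightarrow> mass a' b' \<le> mass a b"
  unfolding mass_def by (auto intro!: nn_integral_mono split: split_indicator)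

lemma mass_split:
  assumes "a \<le> b" "b \<le> c"
  shows "mass a c = mass a b + mass b c"
proof -
  have "mass b c = (\<integral>\<^sup>+x. ennreal (weight x) * indicator {b<..c} x \<partial>lborel)"
    unfolding mass_def
    by (rule nn_integral_cong_AE) (use AE_lborel_singleton[of b] in \<open>eventually_elim, auto split: split_indicator\<close>)
  moreover have "mass a b + (\<integral>\<^sup>+x. ennreal (weight x) * indicator {b<..c} x \<partial>lborel)
      = (\<integral>\<^sup>+x. ennreal (weight x) * indicator {a..b} x + ennreal (weight x) * indicator {b<..c} x \<partial>lborel)"
    unfolding mass_def by (rule nn_integral_add[symmetric]) auto
  moreover have "\<dots> = mass a c"
    unfolding mass_def using assms by (intro nn_integral_cong) (auto split: split_indicator)
  ultimately show ?thesis by simp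
qed

lemma abs_powr_diff_le_mass_if_nonzero:
  assumes ab: "0 \<le> a" "a \<le> b" "b < 1" and nonzero: "\<And>x. x \<in> {a<..<b} \<Longrightarrow> f x \<noteq> 0"
  shows "ennreal \<bar>\<bar>f b\<bar> powr p - \<bar>f a\<bar> powr p\<bar> \<le> ennreal p * mass a b"
proof (cases "mass a b")
  case top
  then show ?thesis using p_pos by (simp add: ennreal_mult_top)
next
  case (real r)
  have "(\<integral>\<^sup>+x. ennreal (weight x * indicator {a..b} x) \<partial>lborel) = ennreal r"
    using real unfolding mass_def by (simp add: indicator_mult_ennreal mult.commute)
  then have "((\<lambda>x. weight x * indicator {a..b} x) has_integral r) UNIV"
    by (intro nn_integral_has_integral) (auto simp: weight_nonneg \<open>0 \<le> r\<close>)
  moreover have "(\<lambda>x. weight x * indicator {a..b} x) = (\<lambda>x. if x \<in> {a..b} then weight x else 0)"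
    by (auto simp: indicator_def)
  ultimately have weight_r: "(weight has_integral r) {a..b}"
    using has_integral_restrict_UNIV[of "{a..b}" weight r] by simp
  then have weight_integral: "((\<lambda>x. p * weight x) has_integral p * r) {a..b}"
    by (rule has_integral_mult_right)
  define D where
    "D x = (if x \<in> {a<..<b} then p * \<bar>f x\<bar> powr (p - 1) * (sgn (f x) * f' x) else 0)" for x
  have "continuous_on {a..b} f" using ab by (intro continuous_on_subset[OF continuous]) auto
  then have "continuous_on {a..b} (\<lambda>x. \<bar>f x\<bar> powr p)"
    using p_pos by (intro continuous_on_powr' continuous_intros) auto
  moreover have "((\<lambda>x. \<bar>f x\<bar> powr p) has_vector_derivative D x) (at x)" if x: "x \<in> {a<..<b}" for x
  proof -
    have "f x \<noteq> 0" using nonzero[OF x] .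
    have "(norm::real \<Rightarrow> real) = abs" by (rule ext) simp
    moreover have "(\<lambda>h. h * sgn (f x)) = (*) (sgn (f x))" by (rule ext) (simp add: mult.commute)
    ultimately have "(abs has_real_derivative sgn (f x)) (at (f x))"
      using has_derivative_norm[OF \<open>f x \<noteq> 0\<close>] by (simp add: has_field_derivative_def)
    moreover have "(f has_real_derivative f' x) (at x)" using x ab by (intro deriv) auto
    ultimately have "((\<lambda>y. \<bar>f y\<bar>) has_real_derivative sgn (f x) * f' x) (at x)"
      by (rule DERIV_chain2)
    from DERIV_chain2[OF has_real_derivative_powr[of "\<bar>f x\<bar>" p] this]
    show ?thesis using \<open>f x \<noteq> 0\<close> x
      by (simp add: D_def has_real_derivative_iff_has_vector_derivative)
  qed
  ultimately have D_integral: "(D has_integral (\<bar>f b\<bar> powr p - \<bar>f a\<bar> powr p)) {a..b}"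
    by (rule fundamental_theorem_of_calculus_interior[OF ab(2)])
  have D_bound: "norm (D x) \<le> p * weight x" for x
  proof (cases "x \<in> {a<..<b}")
    case True
    then have "x \<in> {0<..<1}" "\<bar>sgn (f x)\<bar> = 1" using ab nonzero[OF True] by (auto simp: abs_sgn_eq)
    then show ?thesis using True p_pos by (simp add: D_def weight_def abs_mult mult_ac)
  next
    case False
    then have "D x = 0" unfolding D_def by (rule if_not_P)
    then show ?thesis using p_pos by (simp add: weight_nonneg)
  qed
  have "norm (integral {a..b} D) \<le> integral {a..b} (\<lambda>x. p * weight x)"
    by (rule integral_norm_bound_integral) (use D_integral weight_integral D_bound in auto)
  then have "\<bar>\<bar>f b\<bar> powr p - \<bar>f a\<bar> powr p\<bar> \<le> p * r"
    by (simp add: integral_unique[OF D_integral] integral_unique[OF weight_r])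
  then have "ennreal \<bar>\<bar>f b\<bar> powr p - \<bar>f a\<bar> powr p\<bar> \<le> ennreal (p * r)" by (rule ennreal_leI)
  also have "\<dots> = ennreal p * mass a b" using real p_pos by (simp add: ennreal_mult)
  finally show ?thesis .
qed

text \<open>Between the first and the last zero of \<open>f\<close> in \<open>[a,b]\<close> nothing needs to be estimated:
  both endpoint values are controlled by the zero-free end pieces.\<close>
lemma abs_powr_diff_le_mass:
  assumes ab: "0 \<le> a" "a \<le> b" "b < 1"
  shows "ennreal \<bar>\<bar>f b\<bar> powr p - \<bar>f a\<bar> powr p\<bar> \<le> ennreal p * mass a b"
proof -
  define Z where "Z = {x \<in> {a..b}. f x = 0}"
  have in_Z: "x \<in> Z \<longleftrightarrow> a \<le> x \<and> x \<le> b \<and> f x = 0" for x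
    by (auto simp: Z_def)
  show ?thesis
  proof (cases "Z = {}")
    case True
    then show ?thesis using ab by (intro abs_powr_diff_le_mass_if_nonzero) (auto simp: Z_def)
  next
    case False
    have "closed Z" unfolding Z_def using ab
      by (intro continuous_closed_preimage_constant continuous_on_subset[OF continuous]) auto
    moreover have bdd: "bdd_below Z" "bdd_above Z"
      by (auto simp: in_Z intro: bdd_belowI bdd_aboveI)
    ultimately have "Inf Z \<in> Z" "Sup Z \<in> Z"
      using False by (auto intro: closed_contains_Inf closed_contains_Sup)
    then have z: "a \<le> Inf Z" "Inf Z \<le> b" "f (Inf Z) = 0" and z': "a \<le> Sup Z" "Sup Z \<le> b" "f (Sup Z) = 0"
      by (simp_all add: in_Z)
    have before: "f x \<noteq> 0" if x: "x \<in> {a<..<Inf Z}" for x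
    proof
      assume "f x = 0"
      with x z have "x \<in> Z" by (simp add: in_Z)
      then have "Inf Z \<le> x" by (rule cInf_lower[OF _ bdd(1)])
      with x show False by simp
    qed
    have after: "f x \<noteq> 0" if x: "x \<in> {Sup Z<..<b}" for x
    proof
      assume "f x = 0"
      with x z' have "x \<in> Z" by (simp add: in_Z)
      then have "x \<le> Sup Z" by (rule cSup_upper[OF _ bdd(2)])
      with x show False by simp
    qed
    have "ennreal \<bar>\<bar>f (Inf Z)\<bar> powr p - \<bar>f a\<bar> powr p\<bar> \<le> ennreal p * mass a (Inf Z)"
      by (rule abs_powr_diff_le_mass_if_nonzero) (use ab z before in auto)
    also have "\<dots> \<le> ennreal p * mass a b" using z by (intro mult_left_mono mass_mono) auto
    finally have A: "ennreal (\<bar>f a\<bar> powr p) \<le> ennreal p * mass a b" using z by simp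
    have "ennreal \<bar>\<bar>f b\<bar> powr p - \<bar>f (Sup Z)\<bar> powr p\<bar> \<le> ennreal p * mass (Sup Z) b"
      by (rule abs_powr_diff_le_mass_if_nonzero) (use ab z' after in auto)
    also have "\<dots> \<le> ennreal p * mass a b" using z' by (intro mult_left_mono mass_mono) auto
    finally have B: "ennreal (\<bar>f b\<bar> powr p) \<le> ennreal p * mass a b" using z' by simp
    have "\<bar>\<bar>f b\<bar> powr p - \<bar>f a\<bar> powr p\<bar> \<le> max (\<bar>f a\<bar> powr p) (\<bar>f b\<bar> powr p)"
      using powr_ge_zero[of "\<bar>f a\<bar>" p] powr_ge_zero[of "\<bar>f b\<bar>" p] by (smt (verit))
    then have "ennreal \<bar>\<bar>f b\<bar> powr p - \<bar>f a\<bar> powr p\<bar> \<le> ennreal (max (\<bar>f a\<bar> powr p) (\<bar>f b\<bar> powr p))"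
      by (rule ennreal_leI)
    also have "\<dots> \<le> ennreal p * mass a b"
      using A B by (simp add: max_def)
    finally show ?thesis .
  qed
qed

lemma convergent_at_left_one:
  assumes "mass 0 1 < \<infinity>"
  shows "\<exists>L. (f \<longlongrightarrow> L) (at_left 1)"
proof -
  define \<phi> where "\<phi> s = \<bar>f s\<bar> powr p" for s
  define m where "m s = p * enn2real (mass 0 s)" for s
  have finite: "mass a b < \<infinity>" if "0 \<le> a" "b \<le> 1" for a b
    using mass_mono[OF that] assms by (rule le_less_trans)
  have step: "\<bar>\<phi> b - \<phi> a\<bar> \<le> m b - m a" if ab: "0 \<le> a" "a \<le> b" "b < 1" for a b
  proof -
    have fin: "mass 0 a < \<infinity>" "mass a b < \<infinity>" using ab by (intro finite; simp)+
    have "m b = m a + p * enn2real (mass a b)"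
      using mass_split[of 0 a b] ab fin by (simp add: m_def enn2real_plus distrib_left)
    moreover have "ennreal \<bar>\<phi> b - \<phi> a\<bar> \<le> ennreal (p * enn2real (mass a b))"
      using abs_powr_diff_le_mass[OF ab] fin p_pos
      by (simp add: \<phi>_def ennreal_mult ennreal_enn2real_if)
    then have "\<bar>\<phi> b - \<phi> a\<bar> \<le> p * enn2real (mass a b)"
      using p_pos by (subst (asm) ennreal_le_iff) auto
    ultimately show ?thesis by simp
  qed
  have m_nonneg: "0 \<le> m s" for s
    using p_pos by (simp add: m_def)
  have m_le: "m s \<le> m 1" if "s \<le> 1" for s
    unfolding m_def using that assms p_pos by (intro mult_left_mono enn2real_mono mass_mono) auto
  have \<phi>_nonneg: "0 \<le> \<phi> s" for s
    by (simp add: \<phi>_def)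
  have \<phi>_bound: "\<phi> s \<le> \<phi> 0 + m 1" if "0 \<le> s" "s < 1" for s
  proof -
    have "\<bar>\<phi> s - \<phi> 0\<bar> \<le> m s - m 0" using that by (intro step) auto
    moreover have "m s \<le> m 1" using that by (intro m_le) simp
    moreover note m_nonneg[of 0]
    ultimately show ?thesis by linarith
  qed
  have variation: "\<phi> x - \<phi> y \<le> m y - m x" "\<phi> y - \<phi> x \<le> m y - m x"
    if "0 < x" "x \<le> y" "y < 1" for x y
  proof -
    have "\<bar>\<phi> y - \<phi> x\<bar> \<le> m y - m x" using that by (intro step) auto
    then show "\<phi> x - \<phi> y \<le> m y - m x" "\<phi> y - \<phi> x \<le> m y - m x" by linarith+
  qed
  \<comment> \<open>\<open>\<phi>\<close> has bounded variation on \<open>[0,1)\<close>: it is half the difference of the bounded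
    nondecreasing functions \<open>m + \<phi>\<close> and \<open>m - \<phi>\<close>.\<close>
  have "\<exists>l. ((\<lambda>s. m s + \<phi> s) \<longlongrightarrow> l) (at_left 1)"
  proof (rule convergent_at_left_if_mono_bounded[where B = "2 * m 1 + \<phi> 0"])
    show "m x + \<phi> x \<le> m y + \<phi> y" if "0 < x" "x \<le> y" "y < 1" for x y
      using variation(1)[OF that] by linarith
    show "m x + \<phi> x \<le> 2 * m 1 + \<phi> 0" if "0 < x" "x < 1" for x
    proof -
      have "\<phi> x \<le> \<phi> 0 + m 1" using that by (intro \<phi>_bound) simp_all
      moreover have "m x \<le> m 1" using that by (intro m_le) simp
      ultimately show ?thesis by linarith
    qed
  qed simp
  then obtain l\<^sub>1 where l\<^sub>1: "((\<lambda>s. m s + \<phi> s) \<longlongrightarrow> l\<^sub>1) (at_left 1)" ..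
  have "\<exists>l. ((\<lambda>s. m s - \<phi> s) \<longlongrightarrow> l) (at_left 1)"
  proof (rule convergent_at_left_if_mono_bounded[where B = "m 1"])
    show "m x - \<phi> x \<le> m y - \<phi> y" if "0 < x" "x \<le> y" "y < 1" for x y
      using variation(2)[OF that] by linarith
    show "m x - \<phi> x \<le> m 1" if "0 < x" "x < 1" for x
    proof -
      have "m x \<le> m 1" using that by (intro m_le) simp
      then show ?thesis using \<phi>_nonneg[of x] by linarith
    qed
  qed simp
  then obtain l\<^sub>2 where l\<^sub>2: "((\<lambda>s. m s - \<phi> s) \<longlongrightarrow> l\<^sub>2) (at_left 1)" ..
  have "((\<lambda>s. ((m s + \<phi> s) - (m s - \<phi> s)) / 2) \<longlongrightarrow> (l\<^sub>1 - l\<^sub>2) / 2) (at_left 1)"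
    by (intro tendsto_intros l\<^sub>1 l\<^sub>2) simp
  moreover have "(\<lambda>s. ((m s + \<phi> s) - (m s - \<phi> s)) / 2) = \<phi>"
    by (simp add: fun_eq_iff field_simps)
  ultimately have "(\<phi> \<longlongrightarrow> (l\<^sub>1 - l\<^sub>2) / 2) (at_left 1)" by simp
  then have "((\<lambda>s. \<phi> s powr (1 / p)) \<longlongrightarrow> ((l\<^sub>1 - l\<^sub>2) / 2) powr (1 / p)) (at_left 1)"
    by (rule tendsto_powr') (auto simp: \<phi>_nonneg p_pos)
  moreover have "\<phi> s powr (1 / p) = \<bar>f s\<bar>" for s
    using p_pos by (simp add: \<phi>_def powr_powr)
  ultimately have "((\<lambda>s. \<bar>f s\<bar>) \<longlongrightarrow> ((l\<^sub>1 - l\<^sub>2) / 2) powr (1 / p)) (at_left 1)" by simp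
  moreover have "continuous_on {0<..<1} f" using continuous by (rule continuous_on_subset) auto
  ultimately show ?thesis by (intro convergent_at_left_if_abs_convergent[of 0 1]) auto
qed

lemma mass_le_dilation_mass:
  assumes t: "0 < t" "t \<le> 1"
  shows "mass 0 t \<le> dilation_mass t"
proof -
  have "mass 0 t = (\<integral>\<^sup>+x. ennreal (weight x) * indicator {0..t} x \<partial>lborel)"
    unfolding mass_def ..
  also have "\<dots> = ennreal \<bar>t\<bar> * (\<integral>\<^sup>+\<rho>. ennreal (weight (0 + t * \<rho>)) * indicator {0..t} (0 + t * \<rho>) \<partial>lborel)"
    using t by (intro nn_integral_real_affine) auto
  also have "(\<integral>\<^sup>+\<rho>. ennreal (weight (0 + t * \<rho>)) * indicator {0..t} (0 + t * \<rho>) \<partial>lborel) = dilation_mass t"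
    unfolding dilation_mass_def
  proof (intro nn_integral_cong)
    fix \<rho> :: real
    have "indicator {0..t} (t * \<rho>) = (indicator {0..1} \<rho> :: ennreal)"
      using t by (auto simp: indicator_def zero_le_mult_iff mult_le_cancel_left1)
    then show "ennreal (weight (0 + t * \<rho>)) * indicator {0..t} (0 + t * \<rho>)
        = ennreal (weight (\<rho> * t)) * indicator {0..1} \<rho>"
      by (simp add: mult.commute)
  qed
  also have "ennreal \<bar>t\<bar> * dilation_mass t \<le> 1 * dilation_mass t"
    using t by (intro mult_right_mono) auto
  finally show ?thesis by simp
qed

lemma abs_powr_le_dilation_mass:
  assumes f0: "f 0 = 0"
    and left_continuous: "(\<exists>L. (f \<longlongrightarrow> L) (at_left 1)) \<longrightarrow> (f \<longlongrightarrow> f 1) (at_left 1)"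
    and t: "t \<in> {0..1}"
  shows "ennreal (\<bar>f t\<bar> powr p) \<le> ennreal p * dilation_mass t"
proof -
  have below_one: "ennreal (\<bar>f s\<bar> powr p) \<le> ennreal p * mass 0 s" if "0 \<le> s" "s < 1" for s
  proof -
    have "ennreal \<bar>\<bar>f s\<bar> powr p - \<bar>f 0\<bar> powr p\<bar> \<le> ennreal p * mass 0 s"
      using that by (intro abs_powr_diff_le_mass) auto
    then show ?thesis using f0 by simp
  qed
  consider "t = 0" | "0 < t" "t < 1" | "t = 1" using t by fastforce
  then show ?thesis
  proof cases
    case 1
    then show ?thesis using f0 by simp
  next
    case 2
    then have "ennreal (\<bar>f t\<bar> powr p) \<le> ennreal p * mass 0 t" by (intro below_one) auto
    also have "\<dots> \<le> ennreal p * dilation_mass t"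
      using 2 by (intro mult_left_mono mass_le_dilation_mass) auto
    finally show ?thesis .
  next
    case 3
    show ?thesis
    proof (cases "mass 0 1 < \<infinity>")
      case False
      then have "dilation_mass 1 = \<infinity>" using mass_le_dilation_mass[of 1] by (simp add: less_top[symmetric] top_unique)
      then show ?thesis using p_pos 3 by (simp add: ennreal_mult_top)
    next
      case True
      then have "(f \<longlongrightarrow> f 1) (at_left 1)" using left_continuous convergent_at_left_one by blast
      then have "((\<lambda>s. \<bar>f s\<bar>) \<longlongrightarrow> \<bar>f 1\<bar>) (at_left 1)" by (rule tendsto_rabs)
      then have "((\<lambda>s. \<bar>f s\<bar> powr p) \<longlongrightarrow> \<bar>f 1\<bar> powr p) (at_left 1)"
        by (rule tendsto_powr') (auto simp: p_pos)
      then have "((\<lambda>s. ennreal (\<bar>f s\<bar> powr p)) \<longlongrightarrow> ennreal (\<bar>f 1\<bar> powr p)) (at_left 1)"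
        by (rule tendsto_ennrealI)
      moreover have "eventually (\<lambda>s. ennreal (\<bar>f s\<bar> powr p) \<le> ennreal p * mass 0 1) (at_left 1)"
        using eventually_at_left_real[OF zero_less_one]
      proof (rule eventually_mono)
        fix s :: real assume s: "s \<in> {0<..<1}"
        then have "ennreal (\<bar>f s\<bar> powr p) \<le> ennreal p * mass 0 s" by (intro below_one) auto
        also have "\<dots> \<le> ennreal p * mass 0 1" using s by (intro mult_left_mono mass_mono) auto
        finally show "ennreal (\<bar>f s\<bar> powr p) \<le> ennreal p * mass 0 1" .
      qed
      ultimately have "ennreal (\<bar>f 1\<bar> powr p) \<le> ennreal p * mass 0 1"
        by (rule tendsto_upperbound) simp
      also have "\<dots> \<le> ennreal p * dilation_mass 1"
        by (intro mult_left_mono mass_le_dilation_mass) auto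
      finally show ?thesis using 3 by simp
    qed
  qed
qed

end

theorem lemma4p1:
  fixes p :: real
  assumes "p \<ge> 1"
  shows "\<exists>C>0. \<forall>(\<Lambda>::nat \<Rightarrow> real) (\<mu>::real measure) (f::real \<Rightarrow> real) (f'::real \<Rightarrow> real).
     muntz_seq \<Lambda> \<longrightarrow>
     sets \<mu> = sets borel \<longrightarrow> finite_measure \<mu> \<longrightarrow> emeasure \<mu> (UNIV - {0..1}) = 0 \<longrightarrow>
     muntz_Lp p \<Lambda> f \<longrightarrow>
     continuous_on {0..<1} f \<longrightarrow>
     (\<forall>x\<in>{0<..<1}. (f has_real_derivative f' x) (at x)) \<longrightarrow>
     ((\<exists>L. (f \<longlongrightarrow> L) (at_left 1)) \<longrightarrow> (f \<longlongrightarrow> f 1) (at_left 1)) \<longrightarrow>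
     f 0 = 0 \<longrightarrow>
     (\<integral>\<^sup>+ t. ennreal (\<bar>f t\<bar> powr p) \<partial>\<mu>)
       \<le> ennreal C * (\<integral>\<^sup>+ \<rho>\<in>{0..1}. (\<integral>\<^sup>+ t. ennreal (\<bar>f' (\<rho> * t)\<bar> * \<bar>f (\<rho> * t)\<bar> powr (p - 1)) \<partial>\<mu>) \<partial>lborel)"
proof (intro exI[of _ p] conjI allI impI)
  show "0 < p" using assms by simp
  fix \<Lambda> :: "nat \<Rightarrow> real" and \<mu> :: "real measure" and f f' :: "real \<Rightarrow> real"
  assume sets_\<mu>: "sets \<mu> = sets borel" and finite: "finite_measure \<mu>"
    and null: "emeasure \<mu> (UNIV - {0..1}) = 0"
    and continuous: "continuous_on {0..<1} f"
    and deriv: "\<forall>x\<in>{0<..<1}. (f has_real_derivative f' x) (at x)"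
    and left_continuous: "(\<exists>L. (f \<longlongrightarrow> L) (at_left 1)) \<longrightarrow> (f \<longlongrightarrow> f 1) (at_left 1)"
    and f0: "f 0 = 0"
  interpret abs_powr_variation p f f'
    using assms continuous deriv by unfold_locales auto
  have "AE t in \<mu>. t \<in> {0..1}"
    using null sets_\<mu> by (intro AE_I'[of "UNIV - {0..1}"]) (auto simp: null_sets_def sets_eq_imp_space_eq)
  then have "AE t in \<mu>. ennreal (\<bar>f t\<bar> powr p) \<le> ennreal p * dilation_mass t"
    by eventually_elim (rule abs_powr_le_dilation_mass[OF f0 left_continuous])
  then have "(\<integral>\<^sup>+ t. ennreal (\<bar>f t\<bar> powr p) \<partial>\<mu>) \<le> (\<integral>\<^sup>+ t. ennreal p * dilation_mass t \<partial>\<mu>)"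
    by (rule nn_integral_mono_AE)
  also have "\<dots> = ennreal p * (\<integral>\<^sup>+ t. dilation_mass t \<partial>\<mu>)"
    using borel_measurable_dilation_mass
    by (intro nn_integral_cmult) (simp only: measurable_cong_sets[OF sets_\<mu> refl])
  also have "(\<integral>\<^sup>+ t. dilation_mass t \<partial>\<mu>) = (\<integral>\<^sup>+ \<rho>\<in>{0..1}. (\<integral>\<^sup>+ t. ennreal (weight (\<rho> * t)) \<partial>\<mu>) \<partial>lborel)"
    unfolding dilation_mass_def using sets_\<mu> finite
    by (intro nn_integral_dilation_swap) (auto simp: finite_measure_def)
  also have "\<dots> \<le> (\<integral>\<^sup>+ \<rho>\<in>{0..1}. (\<integral>\<^sup>+ t. ennreal (\<bar>f' (\<rho> * t)\<bar> * \<bar>f (\<rho> * t)\<bar> powr (p - 1)) \<partial>\<mu>) \<partial>lborel)"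
    by (intro nn_integral_mono mult_right_mono ennreal_leI) (auto simp: weight_def)
  finally show "(\<integral>\<^sup>+ t. ennreal (\<bar>f t\<bar> powr p) \<partial>\<mu>)
      \<le> ennreal p * (\<integral>\<^sup>+ \<rho>\<in>{0..1}. (\<integral>\<^sup>+ t. ennreal (\<bar>f' (\<rho> * t)\<bar> * \<bar>f (\<rho> * t)\<bar> powr (p - 1)) \<partial>\<mu>) \<partial>lborel)"
    by (simp add: mult_left_mono)
qed

end
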